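(* With notation as in the context, for each $s\in\mathbb{S}_{p^n}$, $$w(s)=\min\{D(s,t):t\in\mathbb{S}_{p^n}(h),\ \mathfrak{a}(t)\succeq s\}.$$
   Context: Let $p$ be a prime, $n\ge1$, $\mathbb{S}_{p^n}=\{0,\dots,p^n-1\}$; write $s\in\mathbb{S}_{p^n}$ as $s=\sum_{i=1}^n s_{(n-i)}p^{n-i}$ with digits in $\{0,\dots,p-1\}$, and $s\preceq t$ means $s_{(n-i)}\le t_{(n-i)}$ for all $i$. Let $b_1,\dots,b_n$ be integers prime to $p$, $\mathfrak{b}(s)=\sum_i s_{(n-i)}p^{n-i}b_i$, and for $t\in\mathbb{Z}$ let $\mathfrak{a}(t)\in\mathbb{S}_{p^n}$ be the unique element with $\mathfrak{b}(\mathfrak{a}(t))\equiv-t\pmod{p^n}$. Fix $h\in\mathbb{Z}$, let $\mathbb{S}_{p^n}(h)=\{t\in\mathbb{Z}:h\le t<h+p^n\}$, and let $b\in\mathbb{S}_{p^n}(h)$ be the unique element with $\mathfrak{a}(b)=p^n-1$. For $s\in\mathbb{S}_{p^n}$, $t\in\mathbb{S}_{p^n}(h)$ define $D(s,t)=\lfloor(\mathfrak{b}(s)+t-h)/p^n\rfloor$, $d(s)=D(s,b)$, and $w(s)=\min\{d(u)-d(u-s):u\in\mathbb{S}_{p^n},\,u\succeq s\}$. *)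

theory Defs
  imports "HOL-Number_Theory.Number_Theory"
begin

definition digit :: "nat \<Rightarrow> nat \<Rightarrow> nat \<Rightarrow> nat" where
  "digit p s k = (s div p ^ k) mod p"

definition digle :: "nat \<Rightarrow> nat \<Rightarrow> nat \<Rightarrow> nat \<Rightarrow> bool" where
  "digle p n s t \<longleftrightarrow> (\<forall>k<n. digit p s k \<le> digit p t k)"

definition bfrak :: "nat \<Rightarrow> nat \<Rightarrow> (nat \<Rightarrow> int) \<Rightarrow> nat \<Rightarrow> int" where
  "bfrak p n B s = (\<Sum>i=1..n. int (digit p s (n - i)) * int p ^ (n - i) * B i)"

definition afrak :: "nat \<Rightarrow> nat \<Rightarrow> (nat \<Rightarrow> int) \<Rightarrow> int \<Rightarrow> nat" where
  "afrak p n B t = (THE s. s < p ^ n \<and> [bfrak p n B s = - t] (mod int p ^ n))"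

definition bpt :: "nat \<Rightarrow> nat \<Rightarrow> (nat \<Rightarrow> int) \<Rightarrow> int \<Rightarrow> int" where
  "bpt p n B h = (THE t. h \<le> t \<and> t < h + int p ^ n \<and> afrak p n B t = p ^ n - 1)"

definition Dfun :: "nat \<Rightarrow> nat \<Rightarrow> (nat \<Rightarrow> int) \<Rightarrow> int \<Rightarrow> nat \<Rightarrow> int \<Rightarrow> int" where
  "Dfun p n B h s t = \<lfloor>(of_int (bfrak p n B s + t - h) :: real) / of_nat (p ^ n)\<rfloor>"

definition dfun :: "nat \<Rightarrow> nat \<Rightarrow> (nat \<Rightarrow> int) \<Rightarrow> int \<Rightarrow> nat \<Rightarrow> int" where
  "dfun p n B h s = Dfun p n B h s (bpt p n B h)"

definition wfun :: "nat \<Rightarrow> nat \<Rightarrow> (nat \<Rightarrow> int) \<Rightarrow> int \<Rightarrow> nat \<Rightarrow> int" where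
  "wfun p n B h s = Min ((\<lambda>u. dfun p n B h u - dfun p n B h (u - s)) ` {u. u < p ^ n \<and> digle p n s u})"

end

theory Submission
  imports Defs
begin

text \<open>Write \<open>u = v + s\<close>. The condition \<open>u \<succeq> s\<close> says exactly that \<open>v\<close> and \<open>s\<close> add without
  carries, so \<open>\<frak>b(u) = \<frak>b(v) + \<frak>b(s)\<close> and \<open>d(u) - d(v) = D(s, t)\<close>, where \<open>t\<close> is the
  representative of \<open>b + \<frak>b(v)\<close> in \<open>S(h)\<close>. As \<open>\<frak>b(p^n - 1) \<equiv> -b\<close>, this \<open>t\<close> has
  \<open>\<frak>a(t) = p^n - 1 - v\<close>, the digitwise complement of \<open>v\<close>, and "no carries between \<open>v\<close> and \<open>s\<close>"
  means \<open>s \<preceq> p^n - 1 - v\<close>. Since \<open>\<frak>a\<close> is injective on \<open>S(h)\<close>, \<open>v \<mapsto> t\<close> matches the two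
  index sets, so both minima are taken over the same set of values.\<close>

lemma digit_less: "p > 0 \<Longrightarrow> digit p x k < p"
  by (simp add: digit_def)

lemma digit_0: "digit p x 0 = x mod p"
  by (simp add: digit_def)

lemma digit_Suc: "digit p x (Suc k) = digit p (x div p) k"
  by (simp add: digit_def div_mult2_eq)

definition of_digits :: "nat \<Rightarrow> nat \<Rightarrow> (nat \<Rightarrow> nat) \<Rightarrow> nat" where
  "of_digits p n a = (\<Sum>k<n. a k * p ^ k)"

lemma of_digits_Suc: "of_digits p (Suc n) a = a 0 + p * of_digits p n (\<lambda>k. a (Suc k))"
  unfolding of_digits_def
  by (subst sum.lessThan_Suc_shift) (simp del: sum.lessThan_Suc add: sum_distrib_left mult_ac)

lemma of_digits_add: "of_digits p n (\<lambda>k. a k + b k) = of_digits p n a + of_digits p n b"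
  by (simp add: of_digits_def algebra_simps sum.distrib)

lemma of_digits_cong: "(\<And>k. k < n \<Longrightarrow> a k = b k) \<Longrightarrow> of_digits p n a = of_digits p n b"
  by (simp add: of_digits_def)

lemma of_digits_mono: "(\<And>k. k < n \<Longrightarrow> a k \<le> b k) \<Longrightarrow> of_digits p n a \<le> of_digits p n b"
  unfolding of_digits_def by (intro sum_mono) simp

lemma of_digits_less: "(\<And>k. k < n \<Longrightarrow> a k < p) \<Longrightarrow> of_digits p n a < p ^ n"
proof (induction n arbitrary: a)
  case 0
  then show ?case by (simp add: of_digits_def)
next
  case (Suc n)
  have "of_digits p n (\<lambda>k. a (Suc k)) + 1 \<le> p ^ n"
    using Suc by (simp add: Suc_le_eq)
  have "a 0 < p"
    using Suc.prems by simp
  then have "a 0 + p * of_digits p n (\<lambda>k. a (Suc k)) < p * (of_digits p n (\<lambda>k. a (Suc k)) + 1)"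
    by simp
  also have "\<dots> \<le> p * p ^ n"
    using \<open>of_digits p n (\<lambda>k. a (Suc k)) + 1 \<le> p ^ n\<close> by (rule mult_le_mono2)
  finally show ?case by (simp add: of_digits_Suc)
qed

lemma digit_of_digits:
  "(\<And>k. k < n \<Longrightarrow> a k < p) \<Longrightarrow> k < n \<Longrightarrow> digit p (of_digits p n a) k = a k"
proof (induction n arbitrary: a k)
  case 0
  then show ?case by simp
next
  case (Suc n)
  have "p > 0" using Suc.prems(1)[of 0] by simp
  with Suc show ?case
    by (cases k) (simp_all add: of_digits_Suc digit_0 digit_Suc)
qed

lemma of_digits_digit: "p > 0 \<Longrightarrow> x < p ^ n \<Longrightarrow> of_digits p n (digit p x) = x"
proof (induction n arbitrary: x)
  case 0
  then show ?case by (simp add: of_digits_def)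
next
  case (Suc n)
  then have "of_digits p n (digit p (x div p)) = x div p"
    by (simp add: less_mult_imp_div_less mult.commute)
  then show ?case by (simp add: of_digits_Suc digit_0 digit_Suc)
qed

lemma digits_add_no_carry:
  assumes "p > 0" "x < p ^ n" "y < p ^ n" and no_carry: "\<And>k. k < n \<Longrightarrow> digit p x k + digit p y k < p"
  shows "x + y < p ^ n" and "\<And>k. k < n \<Longrightarrow> digit p (x + y) k = digit p x k + digit p y k"
proof -
  have "x + y = of_digits p n (\<lambda>k. digit p x k + digit p y k)"
    using assms by (simp add: of_digits_add of_digits_digit)
  then show "x + y < p ^ n" and "\<And>k. k < n \<Longrightarrow> digit p (x + y) k = digit p x k + digit p y k"
    using of_digits_less[OF no_carry] digit_of_digits[OF no_carry] by simp_all
qed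

lemma digle_imp_le: "p > 0 \<Longrightarrow> x < p ^ n \<Longrightarrow> y < p ^ n \<Longrightarrow> digle p n y x \<Longrightarrow> y \<le> x"
  using of_digits_mono[of n "digit p y" "digit p x" p] by (simp add: digle_def of_digits_digit)

lemma digits_diff:
  assumes "p > 0" "x < p ^ n" "y < p ^ n" and le: "\<And>k. k < n \<Longrightarrow> digit p y k \<le> digit p x k"
    and "k < n"
  shows "digit p (x - y) k = digit p x k - digit p y k"
proof -
  define a where "a k = digit p x k - digit p y k" for k
  have a_less: "\<And>k. a k < p"
    using digit_less[OF \<open>p > 0\<close>] by (simp add: a_def less_imp_diff_less)
  have "of_digits p n a + y = of_digits p n (\<lambda>k. a k + digit p y k)"
    using assms by (simp add: of_digits_add of_digits_digit)
  also have "\<dots> = of_digits p n (digit p x)"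
    using le by (intro of_digits_cong) (simp add: a_def)
  also have "\<dots> = x"
    using assms by (simp add: of_digits_digit)
  finally have "x - y = of_digits p n a" by simp
  moreover have "digit p (of_digits p n a) k = a k"
    using digit_of_digits a_less \<open>k < n\<close> by blast
  ultimately show ?thesis by (simp add: a_def)
qed

lemma of_digits_all_max: "p > 0 \<Longrightarrow> of_digits p n (\<lambda>_. p - 1) + 1 = p ^ n"
proof (induction n)
  case 0
  then show ?case by (simp add: of_digits_def)
next
  case (Suc n)
  have "of_digits p (Suc n) (\<lambda>_. p - 1) + 1 = p * (of_digits p n (\<lambda>_. p - 1) + 1)"
    using Suc.prems by (simp add: of_digits_Suc algebra_simps)
  also have "\<dots> = p ^ Suc n"
    using Suc by simp
  finally show ?case .
qed

lemma digit_pow_minus_1: "p > 0 \<Longrightarrow> k < n \<Longrightarrow> digit p (p ^ n - 1) k = p - 1"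
  using digit_of_digits[of n "\<lambda>_. p - 1" p k] of_digits_all_max[of p n]
  by (metis add_diff_cancel_right' diff_less zero_less_one)

lemma digit_complement:
  "p > 0 \<Longrightarrow> x < p ^ n \<Longrightarrow> k < n \<Longrightarrow> digit p (p ^ n - 1 - x) k = p - 1 - digit p x k"
  using digits_diff[of p "p ^ n - 1" n x k] digit_pow_minus_1 digit_less
  by (simp add: less_Suc_eq_le [symmetric])

lemma bfrak_eq_sum: "bfrak p n B s = (\<Sum>k<n. int (digit p s k) * int p ^ k * B (n - k))"
  unfolding bfrak_def
  by (rule sum.reindex_bij_witness[where i = "\<lambda>k. n - k" and j = "\<lambda>i. n - i"]) auto

lemma bfrak_add:
  assumes "\<And>k. k < n \<Longrightarrow> digit p u k = digit p s k + digit p v k"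
  shows "bfrak p n B u = bfrak p n B s + bfrak p n B v"
  unfolding bfrak_eq_sum using assms by (simp add: sum.distrib[symmetric] algebra_simps)

lemma prime_pow_dvd_digit_combination_imp_zero:
  fixes e C :: "nat \<Rightarrow> int"
  assumes "prime p"
    and "\<And>k. k < n \<Longrightarrow> coprime (C k) (int p)" and "\<And>k. k < n \<Longrightarrow> \<bar>e k\<bar> < int p"
    and "int p ^ n dvd (\<Sum>k<n. e k * int p ^ k * C k)"
  shows "\<forall>k<n. e k = 0"
  using assms(2-)
proof (induction n arbitrary: e C)
  case 0
  then show ?case by simp
next
  case (Suc n)
  have p: "prime (int p)"
    using \<open>prime p\<close> by simp
  define R where "R = (\<Sum>k<n. e (Suc k) * int p ^ k * C (Suc k))"
  have sum_eq: "(\<Sum>k<Suc n. e k * int p ^ k * C k) = e 0 * C 0 + int p * R"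
    unfolding R_def
    by (subst sum.lessThan_Suc_shift) (simp del: sum.lessThan_Suc add: sum_distrib_left mult_ac)
  have dvd_sum: "int p ^ Suc n dvd e 0 * C 0 + int p * R"
    using Suc.prems(3) sum_eq by simp
  then have "int p dvd e 0 * C 0 + int p * R"
    by (rule dvd_trans[rotated]) simp
  then have "int p dvd e 0 * C 0"
    by (simp add: dvd_add_left_iff)
  moreover have "\<not> int p dvd C 0"
  proof
    assume "int p dvd C 0"
    then have "is_unit (int p)"
      using Suc.prems(1)[of 0] by (simp add: coprime_absorb_right)
    then show False
      using p by simp
  qed
  ultimately have "int p dvd e 0"
    using p by (simp add: prime_dvd_mult_iff)
  have e0: "e 0 = 0"
  proof (rule ccontr)
    assume "e 0 \<noteq> 0"
    then have "\<bar>int p\<bar> \<le> \<bar>e 0\<bar>"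
      using \<open>int p dvd e 0\<close> by (rule dvd_imp_le_int)
    then show False
      using Suc.prems(2)[of 0] by simp
  qed
  then have "int p ^ n dvd R"
    using dvd_sum p by (simp add: prime_gt_0_int)
  then have "\<forall>k<n. e (Suc k) = 0"
    using Suc.IH[of "\<lambda>k. C (Suc k)" "\<lambda>k. e (Suc k)"] Suc.prems(1,2) unfolding R_def
    by (meson Suc_mono)
  with e0 show ?case
    by (auto simp: less_Suc_eq_0_disj)
qed

lemma Dfun_eq_div: "Dfun p n B h s t = (bfrak p n B s + t - h) div int p ^ n"
  unfolding Dfun_def using floor_divide_of_int_eq[of "bfrak p n B s + t - h" "int p ^ n"]
  by simp

definition window_rep :: "int \<Rightarrow> int \<Rightarrow> int \<Rightarrow> int" where
  "window_rep h M x = h + (x - h) mod M"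

lemma window_rep_bounds: "M > 0 \<Longrightarrow> h \<le> window_rep h M x \<and> window_rep h M x < h + M"
  by (simp add: window_rep_def)

lemma cong_window_rep: "[window_rep h M x = x] (mod M)"
  unfolding window_rep_def cong_def by (simp add: mod_add_right_eq)

lemma cong_in_window_imp_eq:
  fixes t t' h M :: int
  assumes "h \<le> t" "t < h + M" "h \<le> t'" "t' < h + M" "[t = t'] (mod M)"
  shows "t = t'"
proof -
  have "(t - h) mod M = (t' - h) mod M"
    using assms(5) unfolding cong_def by (rule mod_diff_cong) simp
  then show ?thesis
    using assms(1-4) by (simp add: mod_pos_pos_trivial)
qed

lemma div_add_sub_div: "(a + X) div M - X div M = (a + X mod M) div (M :: int)"
proof -
  have "a + X = a + X mod M + M * (X div M)"
    by simp
  then have "(a + X) div M = (a + X mod M + M * (X div M)) div M"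
    by (rule arg_cong)
  also have "\<dots> = X div M + (a + X mod M) div M" if "M \<noteq> 0"
    using that by (rule div_mult_self2)
  finally show ?thesis
    by (cases "M = 0") simp_all
qed

lemma dfun_diff_eq_Dfun:
  assumes "\<And>k. k < n \<Longrightarrow> digit p (v + s) k = digit p s k + digit p v k"
  shows "dfun p n B h (v + s) - dfun p n B h v
    = Dfun p n B h s (window_rep h (int p ^ n) (bpt p n B h + bfrak p n B v))"
proof -
  define X where "X = bfrak p n B v + bpt p n B h - h"
  have "dfun p n B h (v + s) - dfun p n B h v = (bfrak p n B s + X) div int p ^ n - X div int p ^ n"
    unfolding dfun_def Dfun_eq_div using bfrak_add[OF assms] by (simp add: X_def algebra_simps)
  also have "\<dots> = (bfrak p n B s + X mod int p ^ n) div int p ^ n"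
    by (rule div_add_sub_div)
  finally show ?thesis
    unfolding Dfun_eq_div window_rep_def by (simp add: X_def algebra_simps)
qed

locale coprime_weights =
  fixes p n :: nat and B :: "nat \<Rightarrow> int"
  assumes prime: "prime p" and coprime_B: "\<forall>i\<in>{1..n}. coprime (B i) (int p)"
begin

lemma p_pos: "p > 0"
  using prime prime_gt_0_nat by blast

lemma bfrak_cong_imp_eq:
  assumes "s < p ^ n" "s' < p ^ n" and cong: "[bfrak p n B s = bfrak p n B s'] (mod int p ^ n)"
  shows "s = s'"
proof -
  define e where "e k = int (digit p s k) - int (digit p s' k)" for k
  have "bfrak p n B s - bfrak p n B s' = (\<Sum>k<n. e k * int p ^ k * B (n - k))"
    unfolding bfrak_eq_sum e_def by (simp add: sum_subtractf algebra_simps)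
  then have "int p ^ n dvd (\<Sum>k<n. e k * int p ^ k * B (n - k))"
    using cong by (simp add: cong_iff_dvd_diff)
  moreover have "\<bar>e k\<bar> < int p" for k
    using digit_less[OF p_pos, of s k] digit_less[OF p_pos, of s' k] by (simp add: e_def)
  moreover have "coprime (B (n - k)) (int p)" if "k < n" for k
    using coprime_B that by auto
  ultimately have "\<forall>k<n. e k = 0"
    by (intro prime_pow_dvd_digit_combination_imp_zero[OF prime, where C = "\<lambda>k. B (n - k)"])
      simp_all
  then have "of_digits p n (digit p s) = of_digits p n (digit p s')"
    by (intro of_digits_cong) (simp add: e_def)
  then show ?thesis
    using of_digits_digit[OF p_pos] assms(1,2) by metis
qed

lemma bfrak_surj_mod: "\<exists>s<p ^ n. [bfrak p n B s = y] (mod int p ^ n)"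
proof -
  define f where "f s = bfrak p n B s mod int p ^ n" for s
  have "inj_on f {..<p ^ n}"
    by (intro inj_onI) (auto simp: f_def cong_def intro: bfrak_cong_imp_eq)
  then have "card (f ` {..<p ^ n}) = card {0..<int p ^ n}"
    by (simp add: card_image flip: of_nat_power)
  moreover have "f ` {..<p ^ n} \<subseteq> {0..<int p ^ n}"
    using p_pos by (auto simp: f_def)
  ultimately have "f ` {..<p ^ n} = {0..<int p ^ n}"
    by (intro card_subset_eq) auto
  moreover have "y mod int p ^ n \<in> {0..<int p ^ n}"
    using p_pos by simp
  ultimately obtain s where "s < p ^ n" "f s = y mod int p ^ n"
    by (metis imageE lessThan_iff)
  then show ?thesis
    by (auto simp: f_def cong_def)
qed

lemma afrak_spec: "afrak p n B t < p ^ n \<and> [bfrak p n B (afrak p n B t) = - t] (mod int p ^ n)"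
proof -
  have "\<exists>!s. s < p ^ n \<and> [bfrak p n B s = - t] (mod int p ^ n)"
    using bfrak_surj_mod[of "- t"]
    by (metis bfrak_cong_imp_eq cong_sym cong_trans)
  then show ?thesis
    unfolding afrak_def by (rule theI')
qed

lemma afrak_eq_iff: "s < p ^ n \<Longrightarrow> afrak p n B t = s \<longleftrightarrow> [bfrak p n B s = - t] (mod int p ^ n)"
  using afrak_spec[of t] by (metis bfrak_cong_imp_eq cong_sym cong_trans)

lemma afrak_inj_on_window: "inj_on (afrak p n B) {h..<h + int p ^ n}"
proof (rule inj_onI)
  fix t t' assume t: "t \<in> {h..<h + int p ^ n}" and t': "t' \<in> {h..<h + int p ^ n}"
    and eq: "afrak p n B t = afrak p n B t'"
  have "[- t = - t'] (mod int p ^ n)"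
    using afrak_spec[of t] afrak_spec[of t'] eq by (metis cong_sym cong_trans)
  then show "t = t'"
    using t t' by (intro cong_in_window_imp_eq[of h]) (auto simp: cong_minus_minus_iff)
qed

lemma bpt_eq: "bpt p n B h = window_rep h (int p ^ n) (- bfrak p n B (p ^ n - 1))"
proof -
  define t where "t = window_rep h (int p ^ n) (- bfrak p n B (p ^ n - 1))"
  have t_window: "t \<in> {h..<h + int p ^ n}"
    using window_rep_bounds p_pos by (simp add: t_def)
  have "[- t = - (- bfrak p n B (p ^ n - 1))] (mod int p ^ n)"
    unfolding t_def cong_minus_minus_iff by (rule cong_window_rep)
  then have "afrak p n B t = p ^ n - 1"
    using p_pos by (subst afrak_eq_iff) (simp_all add: cong_sym_eq)
  then have "\<exists>!t. h \<le> t \<and> t < h + int p ^ n \<and> afrak p n B t = p ^ n - 1"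
    using t_window afrak_inj_on_window[of h] by (auto simp: inj_on_def)
  then show ?thesis
    unfolding bpt_def t_def[symmetric]
    using t_window \<open>afrak p n B t = p ^ n - 1\<close> by (auto intro: the1_equality)
qed

lemma afrak_window_rep:
  assumes "v < p ^ n"
  shows "afrak p n B (window_rep h (int p ^ n) (bpt p n B h + bfrak p n B v)) = p ^ n - 1 - v"
proof -
  let ?t = "window_rep h (int p ^ n) (bpt p n B h + bfrak p n B v)"
  let ?c = "bfrak p n B (p ^ n - 1 - v)"
  have "\<And>k. k < n \<Longrightarrow> digit p (p ^ n - 1) k = digit p (p ^ n - 1 - v) k + digit p v k"
    using digit_pow_minus_1[OF p_pos] digit_complement[OF p_pos assms] digit_less[OF p_pos, of v]
    by (simp add: Suc_le_eq)
  then have split: "bfrak p n B (p ^ n - 1) = ?c + bfrak p n B v"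
    by (rule bfrak_add)
  have "[bpt p n B h = - bfrak p n B (p ^ n - 1)] (mod int p ^ n)"
    unfolding bpt_eq by (rule cong_window_rep)
  then have "[bpt p n B h + bfrak p n B v = - bfrak p n B (p ^ n - 1) + bfrak p n B v] (mod int p ^ n)"
    by (rule cong_add[OF _ cong_refl])
  then have "[bpt p n B h + bfrak p n B v = - ?c] (mod int p ^ n)"
    using split by simp
  then have "[?t = - ?c] (mod int p ^ n)"
    using cong_window_rep cong_trans by blast
  then have "[?c = - ?t] (mod int p ^ n)"
    by (metis cong_minus_minus_iff cong_sym minus_minus)
  then show ?thesis
    using assms by (subst afrak_eq_iff) auto
qed

lemma dfun_diff_in_Dfun_image:
  assumes s: "s < p ^ n" and u: "u < p ^ n" "digle p n s u"
  shows "dfun p n B h u - dfun p n B h (u - s)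
    \<in> Dfun p n B h s ` {t. h \<le> t \<and> t < h + int p ^ n \<and> digle p n s (afrak p n B t)}"
proof -
  define v where "v = u - s"
  define t where "t = window_rep h (int p ^ n) (bpt p n B h + bfrak p n B v)"
  have le: "\<And>k. k < n \<Longrightarrow> digit p s k \<le> digit p u k"
    using u(2) by (simp add: digle_def)
  have v_digits: "\<And>k. k < n \<Longrightarrow> digit p v k + digit p s k = digit p u k"
    unfolding v_def using digits_diff[OF p_pos u(1) s le] le by simp
  have "u = v + s"
    using digle_imp_le[OF p_pos u(1) s u(2)] by (simp add: v_def)
  have "v < p ^ n"
    using u(1) by (simp add: v_def)
  have dfun_diff: "dfun p n B h u - dfun p n B h (u - s) = Dfun p n B h s t"
    using dfun_diff_eq_Dfun[of n p v s B h] v_digits \<open>u = v + s\<close> by (simp add: t_def add.commute)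
  have "h \<le> t \<and> t < h + int p ^ n"
    unfolding t_def using p_pos by (simp add: window_rep_bounds)
  moreover have "digle p n s (afrak p n B t)"
    unfolding t_def afrak_window_rep[OF \<open>v < p ^ n\<close>] digle_def
  proof (intro allI impI)
    fix k assume "k < n"
    then show "digit p s k \<le> digit p (p ^ n - 1 - v) k"
      using digit_complement[OF p_pos \<open>v < p ^ n\<close> \<open>k < n\<close>] v_digits[OF \<open>k < n\<close>]
        digit_less[OF p_pos, of u k]
      by linarith
  qed
  ultimately show ?thesis
    using dfun_diff by blast
qed

lemma Dfun_in_dfun_diff_image:
  assumes s: "s < p ^ n" and t: "h \<le> t" "t < h + int p ^ n" "digle p n s (afrak p n B t)"
  shows "Dfun p n B h s t
    \<in> (\<lambda>u. dfun p n B h u - dfun p n B h (u - s)) ` {u. u < p ^ n \<and> digle p n s u}"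
proof -
  define c where "c = afrak p n B t"
  define v where "v = p ^ n - 1 - c"
  have "c < p ^ n"
    using afrak_spec by (simp add: c_def)
  have "v < p ^ n"
    using p_pos by (simp add: v_def)
  have no_carry: "digit p v k + digit p s k < p" if "k < n" for k
    using digit_complement[OF p_pos \<open>c < p ^ n\<close> that] t(3) that digit_less[OF p_pos, of c k]
    unfolding v_def c_def digle_def by fastforce
  have "afrak p n B (window_rep h (int p ^ n) (bpt p n B h + bfrak p n B v)) = afrak p n B t"
    using afrak_window_rep[OF \<open>v < p ^ n\<close>] \<open>c < p ^ n\<close> by (simp add: v_def c_def)
  then have t_eq: "window_rep h (int p ^ n) (bpt p n B h + bfrak p n B v) = t"
    using afrak_inj_on_window[of h] window_rep_bounds[of "int p ^ n"] p_pos t(1,2)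
    by (auto simp: inj_on_def)
  have "v + s < p ^ n" and sum_digits: "\<And>k. k < n \<Longrightarrow> digit p (v + s) k = digit p v k + digit p s k"
    using digits_add_no_carry[OF p_pos \<open>v < p ^ n\<close> s no_carry] by auto
  then have "digle p n s (v + s)"
    by (simp add: digle_def)
  moreover have "dfun p n B h (v + s) - dfun p n B h (v + s - s) = Dfun p n B h s t"
    using dfun_diff_eq_Dfun[of n p v s B h] sum_digits t_eq by (simp add: add.commute)
  ultimately show ?thesis
    using \<open>v + s < p ^ n\<close> by (metis (mono_tags, lifting) image_eqI mem_Collect_eq)
qed

end

theorem corollary3p9:
  fixes p n :: nat and B :: "nat \<Rightarrow> int" and h :: int and s :: nat
  assumes "prime p" and "n \<ge> 1"
    and "\<forall>i\<in>{1..n}. coprime (B i) (int p)"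
    and "s < p ^ n"
  shows "wfun p n B h s
    = Min ((\<lambda>t. Dfun p n B h s t) ` {t. h \<le> t \<and> t < h + int p ^ n \<and> digle p n s (afrak p n B t)})"
proof -
  interpret coprime_weights p n B
    using assms(1,3) by unfold_locales
  have "(\<lambda>u. dfun p n B h u - dfun p n B h (u - s)) ` {u. u < p ^ n \<and> digle p n s u}
      = Dfun p n B h s ` {t. h \<le> t \<and> t < h + int p ^ n \<and> digle p n s (afrak p n B t)}"
    using dfun_diff_in_Dfun_image[OF assms(4)] Dfun_in_dfun_diff_image[OF assms(4)] by blast
  then show ?thesis
    unfolding wfun_def by simp
qed

end
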